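(* Let $X$ be an infinite compact metrizable space, $h\colon X\to X$ a minimal homeomorphism, and suppose $(X,h)$ has the topological small boundary property. Let $\varepsilon>0$. (1) For any open $U\subset X$ with $\partial U$ universally null, there is an open $V\subset X$ with $\overline{V}\subset U$, $\partial V$ topologically $h$-small, and $\mu(U\setminus\overline{V})<\varepsilon$ for all $\mu\in M_h(X)$. (2) For any open $U\subset X$ and any closed $F\subset U$ with $\partial F$ universally null, there is an open $V\subset X$ with $F\subset V\subset\overline{V}\subset U$, $\partial V$ topologically $h$-small, and $\mu(V\setminus F)<\varepsilon$ for all $\mu\in M_h(X)$. (3) For any closed $F\subset X$ with $\partial F$ universally null, there is an open $V\subset X$ with $F\subset V$, $\partial V$ topologically $h$-small, and $\mu(V\setminus F)<\varepsilon$ for all $\mu\in M_h(X)$.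
   Context: $M_h(X)$ denotes the set of $h$-invariant Borel probability measures on $X$; a Borel set is universally null if it has measure $0$ for all $\mu\in M_h(X)$; $\partial A$ is the boundary of $A$. A closed set $F\subset X$ is topologically $h$-small if there is $m\in\mathbb{Z}_{+}$ such that whenever $d(0),\dots,d(m)$ are $m+1$ distinct integers, $h^{d(0)}(F)\cap\cdots\cap h^{d(m)}(F)=\varnothing$. $(X,h)$ has the topological small boundary property if whenever $F,K\subset X$ are disjoint compact sets, there exist open sets $U,V\subset X$ with $F\subset U$, $K\subset V$, $\overline{U}\cap\overline{V}=\varnothing$ and $\partial U$ topologically $h$-small. *)

theory Defs
  imports "HOL-Analysis.Analysis" "HOL-Probability.Probability"
begin

definition hpow :: "('a \<Rightarrow> 'a) \<Rightarrow> int \<Rightarrow> 'a \<Rightarrow> 'a" where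
  "hpow h k = (if k \<ge> 0 then h ^^ nat k else (inv h) ^^ nat (- k))"

definition homeo :: "('a::topological_space \<Rightarrow> 'a) \<Rightarrow> bool" where
  "homeo h \<longleftrightarrow> (\<exists>g. homeomorphism UNIV UNIV h g)"

definition minimal_map :: "('a::topological_space \<Rightarrow> 'a) \<Rightarrow> bool" where
  "minimal_map h \<longleftrightarrow> (\<forall>F. closed F \<and> h ` F = F \<longrightarrow> F = {} \<or> F = UNIV)"

definition inv_measures :: "('a::topological_space \<Rightarrow> 'a) \<Rightarrow> 'a measure set" where
  "inv_measures h = {M. sets M = sets borel \<and> prob_space M \<and>
      (\<forall>A \<in> sets borel. measure M (h -` A) = measure M A)}"

definition universally_null :: "('a::topological_space \<Rightarrow> 'a) \<Rightarrow> 'a set \<Rightarrow> bool" where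
  "universally_null h B \<longleftrightarrow> B \<in> sets borel \<and> (\<forall>M \<in> inv_measures h. measure M B = 0)"

definition top_small :: "('a::topological_space \<Rightarrow> 'a) \<Rightarrow> 'a set \<Rightarrow> bool" where
  "top_small h F \<longleftrightarrow> closed F \<and>
     (\<exists>m::nat. \<forall>d::nat \<Rightarrow> int. inj_on d {0..m} \<longrightarrow>
        (\<Inter>i\<in>{0..m}. hpow h (d i) ` F) = {})"

definition top_small_boundary_property :: "('a::topological_space \<Rightarrow> 'a) \<Rightarrow> bool" where
  "top_small_boundary_property h \<longleftrightarrow>
     (\<forall>F K. compact F \<and> compact K \<and> F \<inter> K = {} \<longrightarrow>
        (\<exists>U V. open U \<and> open V \<and> F \<subseteq> U \<and> K \<subseteq> V \<and>
               closure U \<inter> closure V = {} \<and> top_small h (frontier U)))"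

end

theory Submission
  imports Defs
begin

text \<open>Since \<open>frontier U\<close> is closed and universally null, some neighbourhood \<open>W\<close> of it has
  measure \<open>< \<epsilon>\<close> for all invariant measures at once; this is a weak-* compactness argument, where
  compactness of the space of measures comes from Helly's selection theorem after coding the compact
  metric space as a continuous image of a closed set of reals. The topological small boundary
  property then separates \<open>closure U - W\<close> from \<open>- U\<close> (resp. \<open>F\<close> from the complement of
  \<open>U \<inter> (interior F \<union> W)\<close>) by an open \<open>V\<close> with topologically small boundary, and the error sets
  \<open>U - closure V\<close>, \<open>V - F\<close> lie in \<open>W\<close>.\<close>

section \<open>Mixed-radix digit codes\<close>

definition digit_weight :: "(nat \<Rightarrow> nat) \<Rightarrow> nat \<Rightarrow> real" where
  "digit_weight N k = (\<Prod>j\<le>k. 1 / (4 * real (N j)))"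

definition digit_encode :: "(nat \<Rightarrow> nat) \<Rightarrow> (nat \<Rightarrow> nat) \<Rightarrow> real" where
  "digit_encode N s = (\<Sum>i. real (s i) * digit_weight N i)"

text \<open>Digit \<open>k\<close> ranges over \<open>{0..<N k}\<close> but the radix is \<open>4 * N k\<close>: the unused digits
  leave gaps, so codes that are close must share a long initial block of digits.\<close>

locale digit_coding =
  fixes N :: "nat \<Rightarrow> nat"
  assumes N_pos: "N k > 0"
begin

definition digits :: "(nat \<Rightarrow> nat) \<Rightarrow> bool" where
  "digits s \<longleftrightarrow> (\<forall>i. s i < N i)"

lemma digit_weight_pos: "digit_weight N k > 0"
  unfolding digit_weight_def using N_pos by (intro prod_pos) auto

lemma N_digit_weight_Suc: "real (N (Suc k)) * digit_weight N (Suc k) = digit_weight N k / 4"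
  using N_pos[of "Suc k"] by (simp add: digit_weight_def prod.atMost_Suc field_simps)

lemma digit_weight_Suc_le: "digit_weight N (Suc k) \<le> digit_weight N k / 4"
proof -
  have "digit_weight N (Suc k) = digit_weight N k / (4 * real (N (Suc k)))"
    by (simp add: digit_weight_def)
  also have "\<dots> \<le> digit_weight N k / 4"
    using digit_weight_pos[of k] N_pos[of "Suc k"] by (intro divide_left_mono) auto
  finally show ?thesis .
qed

lemma digit_weight_add_le: "digit_weight N (j + i) \<le> digit_weight N j * (1/4) ^ i"
proof (induction i)
  case (Suc i)
  have "digit_weight N (j + Suc i) \<le> digit_weight N (j + i) / 4"
    using digit_weight_Suc_le[of "j + i"] by simp
  also have "\<dots> \<le> digit_weight N j * (1/4) ^ Suc i" using Suc by simp
  finally show ?case .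
qed simp

lemma digit_weight_antimono:
  assumes "j \<le> k"
  shows "digit_weight N k \<le> digit_weight N j"
proof -
  obtain i where "k = j + i" using assms le_Suc_ex by blast
  then have "digit_weight N k \<le> digit_weight N j * (1/4) ^ i" using digit_weight_add_le by simp
  also have "\<dots> \<le> digit_weight N j"
    using digit_weight_pos[of j] by (intro mult_left_le) (auto simp: power_le_one)
  finally show ?thesis .
qed

lemma digit_weight_le_pow: "digit_weight N k \<le> (1/4) ^ Suc k"
proof -
  have "digit_weight N k \<le> digit_weight N 0 * (1/4) ^ k" using digit_weight_add_le[of 0 k] by simp
  also have "\<dots> \<le> 1/4 * (1/4) ^ k"
    using N_pos[of 0] by (intro mult_right_mono) (simp_all add: digit_weight_def)
  finally show ?thesis by simp
qed

lemma N_digit_weight_le: "real (N i) * digit_weight N i \<le> (1/4) ^ Suc i"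
proof (cases i)
  case 0
  then show ?thesis using N_pos[of 0] by (simp add: digit_weight_def)
next
  case (Suc k)
  then show ?thesis using N_digit_weight_Suc[of k] digit_weight_le_pow[of k] by simp
qed

lemma digit_term_bound:
  assumes "\<bar>d\<bar> \<le> real (N i)"
  shows "\<bar>d * digit_weight N i\<bar> \<le> real (N i) * digit_weight N i"
  using assms digit_weight_pos[of i] by (simp add: abs_mult mult_right_mono)

lemma summable_digit_series:
  assumes "\<And>i. \<bar>d i\<bar> \<le> real (N i)"
  shows "summable (\<lambda>i. d i * digit_weight N i)"
proof (rule summable_comparison_test)
  have "norm (d n * digit_weight N n) \<le> (1/4) ^ Suc n" for n
    using digit_term_bound[OF assms, of n] N_digit_weight_le[of n] by simp
  then show "\<exists>M. \<forall>n\<ge>M. norm (d n * digit_weight N n) \<le> (1/4) ^ Suc n" by blast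
  show "summable (\<lambda>i. (1/4::real) ^ Suc i)"
    by (subst power_Suc) (intro summable_mult summable_geometric, simp)
qed

lemma digit_tail_bound:
  assumes "\<And>i. \<bar>d i\<bar> \<le> real (N i)"
  shows "\<bar>\<Sum>i. d (i + Suc j) * digit_weight N (i + Suc j)\<bar> \<le> digit_weight N j / 3"
proof -
  let ?t = "\<lambda>i. d (i + Suc j) * digit_weight N (i + Suc j)"
  let ?g = "\<lambda>i. digit_weight N j / 4 * (1/4::real) ^ i"
  have bound: "\<bar>?t i\<bar> \<le> ?g i" for i
  proof -
    have "\<bar>?t i\<bar> \<le> real (N (Suc (j + i))) * digit_weight N (Suc (j + i))"
      using digit_term_bound[OF assms] by (simp add: add.commute)
    also have "\<dots> = digit_weight N (j + i) / 4" by (rule N_digit_weight_Suc)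
    also have "\<dots> \<le> ?g i" using digit_weight_add_le[of j i] by simp
    finally show ?thesis .
  qed
  have summable_g: "summable ?g" by (intro summable_mult summable_geometric) simp
  have summable_t: "summable (\<lambda>i. \<bar>?t i\<bar>)"
    by (rule summable_comparison_test[OF _ summable_g]) (use bound in auto)
  have "\<bar>suminf ?t\<bar> \<le> (\<Sum>i. \<bar>?t i\<bar>)" by (rule summable_rabs[OF summable_t])
  also have "\<dots> \<le> suminf ?g" by (rule suminf_le[OF bound summable_t summable_g])
  also have "\<dots> = digit_weight N j / 3" by (subst suminf_mult) (simp_all add: suminf_geometric)
  finally show ?thesis .
qed

lemma digits_diff_bound: "digits s \<Longrightarrow> digits t \<Longrightarrow> \<bar>real (s i) - real (t i)\<bar> \<le> real (N i)"
  unfolding digits_def by (smt (verit) of_nat_0_le_iff of_nat_less_iff)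

lemma digit_encode_diff:
  assumes "digits s" "digits t"
  shows "digit_encode N s - digit_encode N t
      = (\<Sum>i<Suc j. (real (s i) - real (t i)) * digit_weight N i)
      + (\<Sum>i. (real (s (i + Suc j)) - real (t (i + Suc j))) * digit_weight N (i + Suc j))"
proof -
  let ?d = "\<lambda>i. real (s i) - real (t i)"
  have summable_d: "summable (\<lambda>i. ?d i * digit_weight N i)"
    by (rule summable_digit_series) (rule digits_diff_bound[OF assms])
  have summable_s: "summable (\<lambda>i. real (s i) * digit_weight N i)" if "digits s" for s
    by (rule summable_digit_series) (use that in \<open>auto simp: digits_def less_imp_le\<close>)
  have "digit_encode N s - digit_encode N t
      = (\<Sum>i. real (s i) * digit_weight N i - real (t i) * digit_weight N i)"
    unfolding digit_encode_def using summable_s[OF assms(1)] summable_s[OF assms(2)]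
    by (rule suminf_diff)
  also have "\<dots> = (\<Sum>i. ?d i * digit_weight N i)" by (simp add: algebra_simps)
  also have "\<dots> = (\<Sum>i. ?d (i + Suc j) * digit_weight N (i + Suc j)) + (\<Sum>i<Suc j. ?d i * digit_weight N i)"
    by (rule suminf_split_initial_segment[OF summable_d])
  finally show ?thesis by simp
qed

lemma digit_encode_close:
  assumes "digits s" "digits t" "\<And>i. i \<le> j \<Longrightarrow> s i = t i"
  shows "\<bar>digit_encode N s - digit_encode N t\<bar> \<le> digit_weight N j / 3"
proof -
  have "(\<Sum>i<Suc j. (real (s i) - real (t i)) * digit_weight N i) = 0"
    using assms(3) by (intro sum.neutral) auto
  then show ?thesis
    using digit_encode_diff[OF assms(1,2), of j] digits_diff_bound[OF assms(1,2)]
      digit_tail_bound[of "\<lambda>i. real (s i) - real (t i)" j]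
    by simp
qed

lemma digit_encode_separated:
  assumes "digits s" "digits t" "s j \<noteq> t j" "\<And>i. i < j \<Longrightarrow> s i = t i"
  shows "2 * digit_weight N j / 3 \<le> \<bar>digit_encode N s - digit_encode N t\<bar>"
proof -
  have "(\<Sum>i<Suc j. (real (s i) - real (t i)) * digit_weight N i)
      = (real (s j) - real (t j)) * digit_weight N j"
    using assms(4) by (simp add: sum.neutral)
  moreover have "digit_weight N j \<le> \<bar>(real (s j) - real (t j)) * digit_weight N j\<bar>"
    using assms(3) digit_weight_pos[of j] by (simp add: abs_mult mult_le_cancel_right1)
  moreover have "\<bar>\<Sum>i. (real (s (i + Suc j)) - real (t (i + Suc j))) * digit_weight N (i + Suc j)\<bar>
      \<le> digit_weight N j / 3"
    using digit_tail_bound[of "\<lambda>i. real (s i) - real (t i)" j] digits_diff_bound[OF assms(1,2)]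
    by simp
  ultimately show ?thesis using digit_encode_diff[OF assms(1,2), of j] by linarith
qed

lemma digits_eq_if_encode_close:
  assumes "digits s" "digits t" "\<bar>digit_encode N s - digit_encode N t\<bar> < digit_weight N k / 3"
    and "i \<le> k"
  shows "s i = t i"
proof (rule ccontr)
  assume "s i \<noteq> t i"
  define j where "j = (LEAST j. s j \<noteq> t j)"
  have "s j \<noteq> t j" unfolding j_def by (rule LeastI) fact
  moreover have "j \<le> i" unfolding j_def by (rule Least_le) fact
  moreover have "\<And>l. l < j \<Longrightarrow> s l = t l" unfolding j_def using not_less_Least by blast
  ultimately have "2 * digit_weight N j / 3 \<le> \<bar>digit_encode N s - digit_encode N t\<bar>"
    using digit_encode_separated[OF assms(1,2)] by blast
  moreover have "digit_weight N k \<le> digit_weight N j"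
    using \<open>j \<le> i\<close> assms(4) by (intro digit_weight_antimono) auto
  ultimately show False using assms(3) digit_weight_pos[of j] by linarith
qed

lemma digit_encode_inj:
  assumes "digits s" "digits t" "digit_encode N s = digit_encode N t"
  shows "s = t"
proof
  fix i
  show "s i = t i"
    using digits_eq_if_encode_close[OF assms(1,2), of i i] assms(3) digit_weight_pos[of i] by simp
qed

lemma digit_encode_bounds:
  assumes "digits s"
  shows "0 \<le> digit_encode N s" "digit_encode N s \<le> 1/3"
proof -
  have summable_s: "summable (\<lambda>i. real (s i) * digit_weight N i)"
    by (rule summable_digit_series) (use assms in \<open>auto simp: digits_def less_imp_le\<close>)
  show "0 \<le> digit_encode N s" unfolding digit_encode_def
    by (rule suminf_nonneg[OF summable_s]) (simp add: digit_weight_pos less_imp_le)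
  have "real (s i) * digit_weight N i \<le> (1/4) ^ Suc i" for i
    using digit_term_bound[of "real (s i)" i] N_digit_weight_le[of i] assms
    by (simp add: digits_def less_imp_le)
  moreover have "summable (\<lambda>i. (1/4::real) ^ Suc i)"
    by (subst power_Suc) (intro summable_mult summable_geometric, simp)
  ultimately have "digit_encode N s \<le> (\<Sum>i. (1/4::real) ^ Suc i)"
    unfolding digit_encode_def by (intro suminf_le summable_s)
  also have "\<dots> = 1/3" by (subst power_Suc, subst suminf_mult) (simp_all add: suminf_geometric)
  finally show "digit_encode N s \<le> 1/3" .
qed

end

section \<open>Compact metric spaces as continuous images of closed sets of reals\<close>

lemma half_pow_mult_less:
  assumes "c > 0" "e > 0"
  shows "\<exists>k. c * (1/2::real) ^ k < e"
proof -
  obtain k where "(1/2::real) ^ k < e / c" using real_arch_pow_inv[of "e / c" "1/2"] assms by auto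
  then show ?thesis using assms by (auto simp: field_simps)
qed

lemma compact_space_finite_net:
  assumes "compact (UNIV :: 'a::metric_space set)" "e > 0"
  shows "\<exists>n>0. \<exists>q :: nat \<Rightarrow> 'a. \<forall>x. \<exists>i<n. dist x (q i) < e"
proof -
  obtain F where F: "finite F" "(UNIV :: 'a set) \<subseteq> (\<Union>x\<in>F. ball x e)"
    using seq_compact_imp_totally_bounded[OF compact_imp_seq_compact[OF assms(1)]] assms(2) by blast
  obtain q where q: "bij_betw q {0..<card F} F" using ex_bij_betw_nat_finite[OF F(1)] by blast
  have "\<exists>i<card F. dist x (q i) < e" for x
  proof -
    have "x \<in> (\<Union>x\<in>F. ball x e)" using F(2) by blast
    then obtain y where "y \<in> F" "dist y x < e" by auto
    moreover obtain i where "i < card F" "q i = y"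
      using q \<open>y \<in> F\<close> unfolding bij_betw_def by (metis atLeastLessThan_iff imageE)
    ultimately show ?thesis by (auto simp: dist_commute)
  qed
  moreover have "card F > 0" using F by (auto simp: card_gt_0_iff)
  ultimately show ?thesis by blast
qed

text \<open>A point of the space is addressed by a sequence of indices into finer and finer finite
  nets \<open>p k\<close>; the digit coding turns admissible addresses into reals.\<close>

locale net_coding = digit_coding N for N +
  fixes p :: "nat \<Rightarrow> nat \<Rightarrow> 'a::metric_space"
  assumes complete_space: "uniform_space_class.complete (UNIV :: 'a set)"
    and net: "\<And>k x. \<exists>i<N k. dist x (p k i) < (1/2) ^ k"
begin

definition admissible :: "(nat \<Rightarrow> nat) set" where
  "admissible = {s. digits s \<and> (\<forall>k. dist (p k (s k)) (p (Suc k) (s (Suc k))) \<le> 2 * (1/2) ^ k)}"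

definition point :: "(nat \<Rightarrow> nat) \<Rightarrow> 'a" where
  "point s = lim (\<lambda>k. p k (s k))"

definition address :: "'a \<Rightarrow> nat \<Rightarrow> nat" where
  "address x k = (SOME i. i < N k \<and> dist x (p k i) < (1/2) ^ k)"

definition decode :: "real \<Rightarrow> 'a" where
  "decode y = point (inv_into admissible (digit_encode N) y)"

lemma admissible_dist_le_diff:
  assumes "s \<in> admissible" "k \<le> m"
  shows "dist (p k (s k)) (p m (s m)) \<le> 4 * (1/2) ^ k - 4 * (1/2) ^ m"
  using assms(2)
proof (induction m rule: dec_induct)
  case (step m)
  have "dist (p k (s k)) (p (Suc m) (s (Suc m)))
      \<le> dist (p k (s k)) (p m (s m)) + dist (p m (s m)) (p (Suc m) (s (Suc m)))"
    by (rule dist_triangle)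
  also have "\<dots> \<le> 4 * (1/2) ^ k - 4 * (1/2) ^ m + 2 * (1/2) ^ m"
    using step.IH assms(1) unfolding admissible_def by (intro add_mono) auto
  finally show ?case by simp
qed simp

lemma admissible_dist_le:
  assumes "s \<in> admissible" "k \<le> m"
  shows "dist (p k (s k)) (p m (s m)) \<le> 4 * (1/2) ^ k"
proof -
  have "(0::real) < (1/2) ^ m" by simp
  then show ?thesis using admissible_dist_le_diff[OF assms] by linarith
qed

lemma admissible_LIMSEQ:
  assumes "s \<in> admissible"
  shows "(\<lambda>k. p k (s k)) \<longlonglongrightarrow> point s"
proof -
  have "Cauchy (\<lambda>k. p k (s k))"
  proof (rule metric_CauchyI)
    fix e :: real
    assume "e > 0"
    then obtain M where M: "8 * (1/2) ^ M < e" using half_pow_mult_less[of 8 e] by auto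
    have "dist (p m (s m)) (p n (s n)) < e" if "M \<le> m" "M \<le> n" for m n
    proof -
      have "dist (p m (s m)) (p n (s n)) \<le> dist (p M (s M)) (p m (s m)) + dist (p M (s M)) (p n (s n))"
        by (rule dist_triangle3)
      also have "\<dots> \<le> 4 * (1/2) ^ M + 4 * (1/2) ^ M"
        using admissible_dist_le[OF assms] that by (intro add_mono) auto
      finally show ?thesis using M by linarith
    qed
    then show "\<exists>M. \<forall>m\<ge>M. \<forall>n\<ge>M. dist (p m (s m)) (p n (s n)) < e" by blast
  qed
  then show ?thesis
    using complete_space unfolding point_def complete_def by (auto simp: limI)
qed

lemma dist_point_le: "s \<in> admissible \<Longrightarrow> dist (p k (s k)) (point s) \<le> 4 * (1/2) ^ k"
  by (rule LIMSEQ_le_const2[OF tendsto_dist[OF tendsto_const admissible_LIMSEQ]])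
    (use admissible_dist_le in blast)+

lemma dist_point_le_if_encode_close:
  assumes "s \<in> admissible" "t \<in> admissible"
    and "\<bar>digit_encode N s - digit_encode N t\<bar> < digit_weight N k / 3"
  shows "dist (point s) (point t) \<le> 8 * (1/2) ^ k"
proof -
  have "s k = t k" using assms digits_eq_if_encode_close[of s t k k] by (auto simp: admissible_def)
  then have "dist (point s) (point t) \<le> dist (p k (s k)) (point s) + dist (p k (t k)) (point t)"
    using dist_triangle3[of "point s" "point t" "p k (s k)"] by (simp add: dist_commute)
  also have "\<dots> \<le> 8 * (1/2) ^ k" using dist_point_le[OF assms(1), of k] dist_point_le[OF assms(2), of k] by simp
  finally show ?thesis .
qed

lemma decode_encode: "s \<in> admissible \<Longrightarrow> decode (digit_encode N s) = point s"
  unfolding decode_def by (subst inv_into_f_f) (auto intro: inj_onI digit_encode_inj simp: admissible_def)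

lemma continuous_on_decode: "continuous_on (digit_encode N ` admissible) decode"
  unfolding continuous_on_iff
proof (intro ballI allI impI)
  fix y e
  assume "y \<in> digit_encode N ` admissible" "(e::real) > 0"
  then obtain s where s: "s \<in> admissible" "y = digit_encode N s" by auto
  obtain k where k: "8 * (1/2) ^ k < e" using half_pow_mult_less[of 8 e] \<open>e > 0\<close> by auto
  have "dist (decode y') (decode y) < e"
    if y': "y' \<in> digit_encode N ` admissible" "dist y' y < digit_weight N k / 3" for y'
  proof -
    obtain t where t: "t \<in> admissible" "y' = digit_encode N t" using y'(1) by auto
    then have "dist (point t) (point s) \<le> 8 * (1/2) ^ k"
      using y'(2) s by (intro dist_point_le_if_encode_close) (auto simp: dist_real_def)
    then show ?thesis using s t k by (simp add: decode_encode)
  qed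
  moreover have "digit_weight N k / 3 > 0" using digit_weight_pos[of k] by simp
  ultimately show "\<exists>d>0. \<forall>y'\<in>digit_encode N ` admissible. dist y' y < d \<longrightarrow> dist (decode y') (decode y) < e"
    by blast
qed

lemma address_spec: "address x k < N k \<and> dist x (p k (address x k)) < (1/2) ^ k"
  unfolding address_def by (rule someI_ex) (use net in blast)

lemma address_admissible: "address x \<in> admissible"
proof -
  have "dist (p k (address x k)) (p (Suc k) (address x (Suc k))) \<le> 2 * (1/2) ^ k" for k
  proof -
    have "dist (p k (address x k)) (p (Suc k) (address x (Suc k)))
        \<le> dist x (p k (address x k)) + dist x (p (Suc k) (address x (Suc k)))"
      by (rule dist_triangle3)
    also have "\<dots> \<le> (1/2) ^ k + (1/2) ^ Suc k" using address_spec[of x k] address_spec[of x "Suc k"] by linarith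
    also have "\<dots> \<le> 2 * (1/2) ^ k" by simp
    finally show ?thesis .
  qed
  then show ?thesis using address_spec unfolding admissible_def digits_def by auto
qed

lemma point_address: "point (address x) = x"
proof (rule ccontr)
  assume "point (address x) \<noteq> x"
  then obtain k where k: "5 * (1/2) ^ k < dist (point (address x)) x"
    using half_pow_mult_less[of 5 "dist (point (address x)) x"] by auto
  have "dist (point (address x)) x \<le> dist (p k (address x k)) (point (address x)) + dist x (p k (address x k))"
    using dist_triangle3[of "point (address x)" x "p k (address x k)"] by (simp add: dist_commute)
  also have "\<dots> \<le> 4 * (1/2) ^ k + (1/2) ^ k"
    using dist_point_le[OF address_admissible] address_spec[of x k] by (intro add_mono) auto
  finally show False using k by linarith
qed

lemma admissible_digitwise_limit:
  assumes ss: "\<And>n. ss n \<in> admissible" and stable: "\<And>n k. n \<ge> B k \<Longrightarrow> \<forall>j\<le>k. ss n j = t j"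
  shows "t \<in> admissible" "(\<lambda>n. digit_encode N (ss n)) \<longlonglongrightarrow> digit_encode N t"
proof -
  have "ss (B (Suc k)) k = t k \<and> ss (B (Suc k)) (Suc k) = t (Suc k)" for k
    using stable[where n = "B (Suc k)" and k = "Suc k"] by auto
  moreover have "ss (B (Suc k)) k < N k \<and>
      dist (p k (ss (B (Suc k)) k)) (p (Suc k) (ss (B (Suc k)) (Suc k))) \<le> 2 * (1/2) ^ k" for k
    using ss[of "B (Suc k)"] unfolding admissible_def digits_def by blast
  ultimately show t: "t \<in> admissible" unfolding admissible_def digits_def by simp
  show "(\<lambda>n. digit_encode N (ss n)) \<longlonglongrightarrow> digit_encode N t"
  proof (rule metric_LIMSEQ_I)
    fix e :: real
    assume "e > 0"
    then obtain k where k: "(1/4::real) ^ k < e" using real_arch_pow_inv[of e "1/4"] by auto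
    have "dist (digit_encode N (ss n)) (digit_encode N t) < e" if "B k \<le> n" for n
    proof -
      have "\<bar>digit_encode N (ss n) - digit_encode N t\<bar> \<le> digit_weight N k / 3"
        using that t ss stable by (intro digit_encode_close) (auto simp: admissible_def)
      moreover have "digit_weight N k \<le> (1/4) ^ k"
        using digit_weight_le_pow[of k] digit_weight_pos[of k] by simp
      ultimately show ?thesis using k digit_weight_pos[of k] by (simp add: dist_real_def)
    qed
    then show "\<exists>n0. \<forall>n\<ge>n0. dist (digit_encode N (ss n)) (digit_encode N t) < e" by blast
  qed
qed

lemma closed_encode_admissible: "closed (digit_encode N ` admissible)"
  unfolding closed_sequential_limits
proof (intro allI impI, elim conjE)
  fix xs l
  assume xs: "\<forall>n. xs n \<in> digit_encode N ` admissible" and lim: "xs \<longlonglongrightarrow> l"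
  have "\<forall>n. \<exists>s. s \<in> admissible \<and> xs n = digit_encode N s" using xs by blast
  then obtain ss where ss: "\<And>n. ss n \<in> admissible" "\<And>n. xs n = digit_encode N (ss n)"
    by metis
  have "\<exists>M. \<forall>m\<ge>M. \<forall>n\<ge>M. dist (xs m) (xs n) < digit_weight N k / 3" for k
  proof -
    have "digit_weight N k / 3 > 0" using digit_weight_pos[of k] by simp
    then show ?thesis using LIMSEQ_imp_Cauchy[OF lim] unfolding Cauchy_def by blast
  qed
  then obtain M where M: "\<And>k m n. m \<ge> M k \<Longrightarrow> n \<ge> M k \<Longrightarrow> dist (xs m) (xs n) < digit_weight N k / 3"
    by metis
  define B where "B k = (\<Sum>i\<le>k. M i)" for k
  define t where "t j = ss (B j) j" for j
  have stable: "\<forall>j\<le>k. ss n j = t j" if "n \<ge> B k" for n k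
  proof (intro allI impI)
    fix j
    assume "j \<le> k"
    then have "M j \<le> B j" "B j \<le> B k" unfolding B_def by (auto intro: member_le_sum sum_mono2)
    then have "dist (xs n) (xs (B j)) < digit_weight N j / 3" using M that by simp
    then show "ss n j = t j" unfolding t_def
      using digits_eq_if_encode_close[of "ss n" "ss (B j)" j j] ss by (auto simp: admissible_def dist_real_def)
  qed
  note t = admissible_digitwise_limit[of ss B t, OF ss(1) stable]
  have "xs = (\<lambda>n. digit_encode N (ss n))" using ss(2) by (simp add: fun_eq_iff)
  then have "l = digit_encode N t" using LIMSEQ_unique[OF lim] t(2) by simp
  then show "l \<in> digit_encode N ` admissible" using t(1) by blast
qed

end

lemma compact_space_image_of_closed_real_set:
  assumes "compact (UNIV :: 'a::metric_space set)"
  obtains K and P :: "real \<Rightarrow> 'a::metric_space" and \<iota>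
  where "closed K" "K \<subseteq> {-1<..1}" "continuous_on K P" "\<And>x. \<iota> x \<in> K" "\<And>x. P (\<iota> x) = x"
proof -
  have "\<forall>k. \<exists>n. n > 0 \<and> (\<exists>q :: nat \<Rightarrow> 'a. \<forall>x. \<exists>i<n. dist x (q i) < (1/2) ^ k)"
    using compact_space_finite_net[OF assms] by simp
  then have "\<exists>N. \<forall>k. N k > 0 \<and> (\<exists>q :: nat \<Rightarrow> 'a. \<forall>x. \<exists>i<N k. dist x (q i) < (1/2) ^ k)"
    by (rule choice)
  then obtain N where N: "\<forall>k. N k > 0 \<and> (\<exists>q :: nat \<Rightarrow> 'a. \<forall>x. \<exists>i<N k. dist x (q i) < (1/2) ^ k)"
    by blast
  then have "\<exists>p :: nat \<Rightarrow> nat \<Rightarrow> 'a. \<forall>k x. \<exists>i<N k. dist x (p k i) < (1/2) ^ k"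
    by (intro choice) blast
  then obtain p :: "nat \<Rightarrow> nat \<Rightarrow> 'a" where p: "\<And>k x. \<exists>i<N k. dist x (p k i) < (1/2) ^ k"
    by blast
  interpret net_coding N p
  proof
    show "N k > 0" for k using N by blast
    show "uniform_space_class.complete (UNIV :: 'a set)" by (rule compact_imp_complete[OF assms])
  qed (rule p)
  have "digit_encode N s \<in> {-1<..1}" if "s \<in> admissible" for s
    using digit_encode_bounds[of s] that by (auto simp: admissible_def)
  then have "digit_encode N ` admissible \<subseteq> {-1<..1}" by blast
  then show ?thesis
    using that[OF closed_encode_admissible _ continuous_on_decode, of "\<lambda>x. digit_encode N (address x)"]
    by (simp add: address_admissible decode_encode point_address)
qed

section \<open>Weak-* limits of empirical measures\<close>

definition cutoff :: "'b::metric_space set \<Rightarrow> nat \<Rightarrow> 'b \<Rightarrow> real" where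
  "cutoff C j x = max 0 (1 - real j * infdist x C)"

lemma continuous_on_cutoff: "continuous_on UNIV (cutoff C j)"
  unfolding cutoff_def by (intro continuous_intros continuous_on_infdist)

lemma cutoff_bounds: "0 \<le> cutoff C j x" "cutoff C j x \<le> 1"
  unfolding cutoff_def using infdist_nonneg[of x C] by auto

lemma norm_cutoff_le: "norm (cutoff C j x) \<le> 1"
  using cutoff_bounds[of C j x] by simp

lemma cutoff_eq_1: "x \<in> C \<Longrightarrow> cutoff C j x = 1"
  unfolding cutoff_def by (simp add: infdist_zero)

lemma indicator_le_cutoff: "indicator C x \<le> cutoff C j x"
  using cutoff_eq_1[of x C j] cutoff_bounds[of C j x] by (auto simp: indicator_def)

lemma cutoff_LIMSEQ_indicator:
  assumes "closed C" "C \<noteq> {}"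
  shows "(\<lambda>j. cutoff C j x) \<longlonglongrightarrow> indicator C x"
proof (cases "x \<in> C")
  case True
  then show ?thesis by (simp add: cutoff_eq_1)
next
  case False
  then have pos: "infdist x C > 0"
    using in_closure_iff_infdist_zero[OF assms(2), of x] assms(1) infdist_nonneg[of x C]
    by (simp add: closure_closed)
  obtain j0 :: nat where j0: "1 / infdist x C < j0" using reals_Archimedean2 by blast
  have "cutoff C j x = 0" if "j0 \<le> j" for j
  proof -
    have "1 < real j0 * infdist x C" using j0 pos by (simp add: field_simps)
    also have "\<dots> \<le> real j * infdist x C" using that pos by (simp add: mult_right_mono)
    finally show ?thesis unfolding cutoff_def by simp
  qed
  then have "(\<lambda>j. cutoff C j x) \<longlonglongrightarrow> 0"
    by (intro tendsto_eventually) (auto simp: eventually_sequentially)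
  then show ?thesis using False by simp
qed

lemma integral_cutoff_LIMSEQ:
  fixes C :: "'b::metric_space set"
  assumes "closed C" "C \<noteq> {}" "finite_measure M" "sets M = sets borel"
  shows "(\<lambda>j. integral\<^sup>L M (cutoff C j)) \<longlonglongrightarrow> measure M C"
proof -
  interpret finite_measure M by fact
  have C: "C \<in> sets M" using assms(1,4) by simp
  have "(\<lambda>j. integral\<^sup>L M (cutoff C j)) \<longlonglongrightarrow> integral\<^sup>L M (indicator C)"
  proof (rule integral_dominated_convergence[where w = "\<lambda>_. 1"])
    show "cutoff C j \<in> borel_measurable M" for j
      using borel_measurable_continuous_onI[OF continuous_on_cutoff] measurable_cong_sets assms(4)
      by blast
  qed (use C norm_cutoff_le cutoff_LIMSEQ_indicator[OF assms(1,2)] in auto)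
  then show ?thesis using C by simp
qed

definition empirical_measure :: "nat \<Rightarrow> (nat \<Rightarrow> 'b::topological_space) \<Rightarrow> 'b measure" where
  "empirical_measure L x = distr (measure_pmf (pmf_of_set {..<L})) borel x"

lemma integral_empirical_measure:
  assumes "L > 0" "g \<in> borel_measurable borel"
  shows "integral\<^sup>L (empirical_measure L x) g = (\<Sum>k<L. g (x k)) / real L"
proof -
  have "integral\<^sup>L (empirical_measure L x) g = integral\<^sup>L (measure_pmf (pmf_of_set {..<L})) (\<lambda>k. g (x k))"
    unfolding empirical_measure_def using assms(2) by (intro integral_distr) simp_all
  also have "\<dots> = (\<Sum>k<L. g (x k)) / real L"
    using assms(1) by (subst integral_pmf_of_set) auto
  finally show ?thesis .
qed

lemma real_distribution_empirical_measure: "real_distribution (empirical_measure L x)"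
proof (rule real_distribution.intro)
  show "prob_space (empirical_measure L x)" unfolding empirical_measure_def
    by (intro prob_space.prob_space_distr prob_space_measure_pmf) simp
qed (unfold_locales, simp add: empirical_measure_def)

lemma measure_empirical_measure_eq_1:
  assumes "A \<in> sets borel" "\<And>k. x k \<in> A"
  shows "measure (empirical_measure L x) A = 1"
proof -
  have "measure (empirical_measure L x) A = measure (measure_pmf (pmf_of_set {..<L})) (x -` A \<inter> UNIV)"
    unfolding empirical_measure_def using assms(1) by (subst measure_distr) auto
  also have "x -` A \<inter> UNIV = UNIV" using assms(2) by auto
  finally show ?thesis by simp
qed

lemma empirical_real_averages_convergent_subseq:
  fixes z :: "nat \<Rightarrow> nat \<Rightarrow> real"
  assumes K: "closed K" "K \<subseteq> {a<..b}" and z: "\<And>n k. z n k \<in> K" and L: "\<And>n. L n > 0"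
  shows "\<exists>r \<nu>. strict_mono r \<and> real_distribution \<nu> \<and> measure \<nu> K = 1 \<and>
    (\<forall>(G :: real \<Rightarrow> real) B. continuous_on UNIV G \<and> (\<forall>x. norm (G x) \<le> B) \<longrightarrow>
       (\<lambda>n. (\<Sum>k<L (r n). G (z (r n) k)) / real (L (r n))) \<longlonglongrightarrow> integral\<^sup>L \<nu> G)"
proof -
  let ?\<mu> = "\<lambda>n. empirical_measure (L n) (z n)"
  have "tight ?\<mu>"
    unfolding tight_def
  proof (intro conjI allI impI exI)
    show "a < b" using K(2) z[of 0 0] by auto
    show "measure (?\<mu> n) {a<..b} > 1 - e" if "e > 0" for n e
      using that K(2) z by (subst measure_empirical_measure_eq_1) (auto simp: subset_iff)
  qed (rule real_distribution_empirical_measure)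
  then obtain r \<nu> where r: "strict_mono r" "real_distribution \<nu>" "weak_conv_m (?\<mu> \<circ> id \<circ> r) \<nu>"
    using tight_imp_convergent_subsubsequence[of ?\<mu> id] by (auto simp: strict_mono_def)
  interpret \<nu>: real_distribution \<nu> by (rule r(2))
  have averages: "(\<lambda>n. (\<Sum>k<L (r n). G (z (r n) k)) / real (L (r n))) \<longlonglongrightarrow> integral\<^sup>L \<nu> G"
    if G: "continuous_on UNIV G" "\<And>x. norm (G x) \<le> B" for G :: "real \<Rightarrow> real" and B
  proof -
    have "(\<lambda>n. integral\<^sup>L ((?\<mu> \<circ> id \<circ> r) n) G) \<longlonglongrightarrow> integral\<^sup>L \<nu> G"
      using G r real_distribution_empirical_measure
      by (intro weak_conv_imp_integral_bdd_continuous_conv) (auto simp: continuous_on_eq_continuous_at o_def)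
    then show ?thesis
      using L borel_measurable_continuous_onI[OF G(1)] by (simp add: integral_empirical_measure)
  qed
  have "integral\<^sup>L \<nu> (cutoff K j) = 1" for j
  proof (rule LIMSEQ_unique[OF _ tendsto_const])
    show "(\<lambda>n. 1) \<longlonglongrightarrow> integral\<^sup>L \<nu> (cutoff K j)"
      using averages[OF continuous_on_cutoff[of K j] norm_cutoff_le] L
      by (simp add: z cutoff_eq_1 less_not_refl2)
  qed
  moreover have "K \<noteq> {}" using z by blast
  ultimately have "measure \<nu> K = 1"
    using integral_cutoff_LIMSEQ[OF K(1) _ \<nu>.finite_measure_axioms \<nu>.events_eq_borel]
    by (simp add: LIMSEQ_const_iff)
  then show ?thesis
  proof (intro exI[of _ r] exI[of _ \<nu>] conjI allI impI)
    fix G :: "real \<Rightarrow> real" and B :: real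
    assume "continuous_on UNIV G \<and> (\<forall>x. norm (G x) \<le> B)"
    then show "(\<lambda>n. (\<Sum>k<L (r n). G (z (r n) k)) / real (L (r n))) \<longlonglongrightarrow> integral\<^sup>L \<nu> G"
      by (intro averages) auto
  qed (use r(1,2) in auto)
qed

text \<open>Helly's theorem is applied on the real side of the coding. The coding map \<open>\<iota>\<close> need not be
  measurable: empirical measures are pushed forward along it pointwise.\<close>

lemma empirical_averages_convergent_subseq:
  fixes x :: "nat \<Rightarrow> nat \<Rightarrow> 'a::metric_space"
  assumes cpt: "compact (UNIV :: 'a set)" and L: "\<And>n. L n > 0"
  obtains r \<mu> where "strict_mono r" "sets \<mu> = sets borel" "prob_space \<mu>"
    "\<And>f :: 'a \<Rightarrow> real. continuous_on UNIV f \<Longrightarrow>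
       (\<lambda>n. (\<Sum>k<L (r n). f (x (r n) k)) / real (L (r n))) \<longlonglongrightarrow> integral\<^sup>L \<mu> f"
proof -
  obtain K and P :: "real \<Rightarrow> 'a" and \<iota> where KP: "closed K" "K \<subseteq> {-1<..1}" "continuous_on K P"
    "\<And>x. \<iota> x \<in> K" "\<And>x. P (\<iota> x) = x"
    using compact_space_image_of_closed_real_set[OF cpt] by blast
  have "\<exists>r \<nu>. strict_mono r \<and> real_distribution \<nu> \<and> measure \<nu> K = 1 \<and>
    (\<forall>(G :: real \<Rightarrow> real) B. continuous_on UNIV G \<and> (\<forall>x. norm (G x) \<le> B) \<longrightarrow>
       (\<lambda>n. (\<Sum>k<L (r n). G (\<iota> (x (r n) k))) / real (L (r n))) \<longlonglongrightarrow> integral\<^sup>L \<nu> G)"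
    by (rule empirical_real_averages_convergent_subseq[OF KP(1,2)]) (use KP(4) L in auto)
  then obtain r \<nu> where r: "strict_mono r" "real_distribution \<nu>" "measure \<nu> K = 1"
    and averages: "\<forall>(G :: real \<Rightarrow> real) B. continuous_on UNIV G \<and> (\<forall>x. norm (G x) \<le> B) \<longrightarrow>
       (\<lambda>n. (\<Sum>k<L (r n). G (\<iota> (x (r n) k))) / real (L (r n))) \<longlonglongrightarrow> integral\<^sup>L \<nu> G"
    by blast
  interpret \<nu>: real_distribution \<nu> by (rule r(2))
  define P' where "P' y = (if y \<in> K then P y else x 0 0)" for y
  have P': "P' \<in> \<nu> \<rightarrow>\<^sub>M borel"
    unfolding P'_def measurable_cong_sets[OF \<nu>.events_eq_borel refl]
    by (rule borel_measurable_continuous_on_if) (use KP(1,3) in auto)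
  define \<mu> where "\<mu> = distr \<nu> borel P'"
  have averages_\<mu>: "(\<lambda>n. (\<Sum>k<L (r n). f (x (r n) k)) / real (L (r n))) \<longlonglongrightarrow> integral\<^sup>L \<mu> f"
    if f: "continuous_on UNIV f" for f :: "'a \<Rightarrow> real"
  proof -
    obtain B where B: "\<And>y. norm (f y) \<le> B"
      using compact_imp_bounded[OF compact_continuous_image[OF f cpt]] by (auto simp: bounded_iff)
    have "continuous_on K (f \<circ> P)"
      by (rule continuous_on_compose[OF KP(3) continuous_on_subset[OF f]]) simp
    moreover have "closedin (top_of_set UNIV) K" using KP(1) by (simp add: closedin_closed_eq)
    moreover have "0 \<le> B" using order_trans[OF norm_ge_zero B] .
    moreover have "\<And>y. y \<in> K \<Longrightarrow> norm ((f \<circ> P) y) \<le> B" using B by simp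
    ultimately have "\<exists>G. continuous_on UNIV G \<and> (\<forall>y\<in>K. G y = f (P y)) \<and> (\<forall>y. norm (G y) \<le> B)"
      by (rule Tietze) auto
    then obtain G where G: "continuous_on UNIV G" "\<And>y. y \<in> K \<Longrightarrow> G y = f (P y)"
      "\<And>y. norm (G y) \<le> B"
      by blast
    have "integral\<^sup>L \<mu> f = integral\<^sup>L \<nu> (\<lambda>y. f (P' y))"
      unfolding \<mu>_def using P' borel_measurable_continuous_onI[OF f] by (rule integral_distr)
    also have "\<dots> = integral\<^sup>L \<nu> G"
    proof (rule integral_cong_AE)
      show "(\<lambda>y. f (P' y)) \<in> borel_measurable \<nu>"
        using measurable_comp[OF P' borel_measurable_continuous_onI[OF f]] by (simp add: o_def)
      show "G \<in> borel_measurable \<nu>"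
        using borel_measurable_continuous_onI[OF G(1)] by (simp add: measurable_cong_sets[OF \<nu>.events_eq_borel refl])
      have "AE y in \<nu>. y \<in> K" by (rule \<nu>.AE_prob_1[OF r(3)])
      then show "AE y in \<nu>. f (P' y) = G y" by eventually_elim (simp add: P'_def G(2))
    qed
    finally have "integral\<^sup>L \<mu> f = integral\<^sup>L \<nu> G" .
    moreover have "(\<lambda>n. (\<Sum>k<L (r n). G (\<iota> (x (r n) k))) / real (L (r n))) \<longlonglongrightarrow> integral\<^sup>L \<nu> G"
      using G(1,3) by (intro averages[rule_format]) auto
    moreover have "G (\<iota> y) = f y" for y using G(2) KP(4,5) by simp
    ultimately show ?thesis by (simp only:)
  qed
  show ?thesis
  proof (rule that[OF r(1)])
    show "sets \<mu> = sets borel" by (simp add: \<mu>_def)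
    show "prob_space \<mu>" unfolding \<mu>_def by (rule \<nu>.prob_space_distr[OF P'])
  qed (rule averages_\<mu>)
qed

section \<open>Invariant measures\<close>

lemma finite_measure_eqI_integral_continuous:
  fixes M1 M2 :: "'a::metric_space measure"
  assumes M1: "finite_measure M1" "sets M1 = sets borel"
    and M2: "finite_measure M2" "sets M2 = sets borel"
    and eq: "\<And>f :: 'a \<Rightarrow> real. continuous_on UNIV f \<Longrightarrow> integral\<^sup>L M1 f = integral\<^sup>L M2 f"
  shows "M1 = M2"
proof (rule measure_eqI_generator_eq[where E = "Collect closed" and \<Omega> = UNIV and A = "\<lambda>_. UNIV"])
  have "sets (borel :: 'a measure) = sigma_sets UNIV (Collect closed)"
    unfolding borel_eq_closed by (rule sets_measure_of) auto
  then show "sets M1 = sigma_sets UNIV (Collect closed)" "sets M2 = sigma_sets UNIV (Collect closed)"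
    using M1(2) M2(2) by simp_all
  show "emeasure M1 UNIV \<noteq> \<infinity>" for i :: nat
    using finite_measure.emeasure_finite[OF M1(1)] by simp
  fix C :: "'a set"
  assume "C \<in> Collect closed"
  then have C: "closed C" by simp
  show "emeasure M1 C = emeasure M2 C"
  proof (cases "C = {}")
    case False
    have "(\<lambda>j. integral\<^sup>L M1 (cutoff C j)) \<longlonglongrightarrow> measure M1 C"
      by (rule integral_cutoff_LIMSEQ[OF C False M1])
    moreover have "(\<lambda>j. integral\<^sup>L M1 (cutoff C j)) \<longlonglongrightarrow> measure M2 C"
      using integral_cutoff_LIMSEQ[OF C False M2] eq[OF continuous_on_cutoff] by simp
    ultimately have "measure M1 C = measure M2 C" by (rule LIMSEQ_unique)
    then show ?thesis
      by (simp add: finite_measure.emeasure_eq_measure[OF M1(1)] finite_measure.emeasure_eq_measure[OF M2(1)])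
  qed simp
qed (auto simp: Int_stable_def)

lemma inv_measuresD:
  assumes "\<mu> \<in> inv_measures h"
  shows "sets \<mu> = sets borel" "prob_space \<mu>" "\<And>A. A \<in> sets borel \<Longrightarrow> measure \<mu> (h -` A) = measure \<mu> A"
  using assms unfolding inv_measures_def by auto

lemma inv_measures_measure_mono:
  assumes "\<mu> \<in> inv_measures h" "A \<subseteq> W" "W \<in> sets borel"
  shows "measure \<mu> A \<le> measure \<mu> W"
  using finite_measure.finite_measure_mono[OF prob_space.finite_measure[OF inv_measuresD(2)[OF assms(1)]]]
    assms(2,3) inv_measuresD(1)[OF assms(1)]
  by simp

lemma inv_measuresI_integral:
  fixes \<mu> :: "'a::metric_space measure"
  assumes "sets \<mu> = sets borel" "prob_space \<mu>" "continuous_on UNIV h"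
    and eq: "\<And>f :: 'a \<Rightarrow> real. continuous_on UNIV f \<Longrightarrow> integral\<^sup>L \<mu> (\<lambda>x. f (h x)) = integral\<^sup>L \<mu> f"
  shows "\<mu> \<in> inv_measures h"
proof -
  interpret prob_space \<mu> by fact
  have h: "h \<in> \<mu> \<rightarrow>\<^sub>M borel"
    unfolding measurable_cong_sets[OF assms(1) refl] by (rule borel_measurable_continuous_onI[OF assms(3)])
  have "distr \<mu> borel h = \<mu>"
  proof (rule finite_measure_eqI_integral_continuous)
    show "finite_measure (distr \<mu> borel h)" by (rule finite_measure_distr[OF h])
    fix f :: "'a \<Rightarrow> real"
    assume f: "continuous_on UNIV f"
    show "integral\<^sup>L (distr \<mu> borel h) f = integral\<^sup>L \<mu> f"
      using integral_distr[OF h borel_measurable_continuous_onI[OF f]] eq[OF f] by simp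
  qed (simp_all add: assms(1) finite_measure_axioms)
  then have "measure \<mu> (h -` A) = measure \<mu> A" if "A \<in> sets borel" for A
    using measure_distr[OF h that] sets_eq_imp_space_eq[OF assms(1)] by simp
  then show ?thesis unfolding inv_measures_def using assms(1,2) by auto
qed

lemma borel_measurable_funpow:
  fixes h :: "'a::topological_space \<Rightarrow> 'a"
  assumes "continuous_on UNIV h"
  shows "h ^^ k \<in> borel_measurable borel"
proof (induction k)
  case (Suc k)
  then show ?case
    unfolding funpow_Suc_right by (rule measurable_comp[OF borel_measurable_continuous_onI[OF assms]])
qed simp

lemma inv_measures_measure_funpow_vimage:
  assumes "\<mu> \<in> inv_measures h" "continuous_on UNIV h" "C \<in> sets borel"
  shows "measure \<mu> ((h ^^ k) -` C) = measure \<mu> C"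
proof (induction k)
  case (Suc k)
  have "(h ^^ k) -` C \<in> sets borel"
    using measurable_sets[OF borel_measurable_funpow[OF assms(2)] assms(3)] by simp
  have "measure \<mu> ((h ^^ Suc k) -` C) = measure \<mu> (h -` ((h ^^ k) -` C))"
    by (simp only: funpow_Suc_right vimage_comp)
  also have "\<dots> = measure \<mu> ((h ^^ k) -` C)" by (rule inv_measuresD(3)[OF assms(1)]) fact
  also have "\<dots> = measure \<mu> C" by (rule Suc)
  finally show ?case .
qed simp

text \<open>The expected number of visits of an orbit segment of length \<open>n\<close> to \<open>C\<close> is \<open>n \<mu>(C)\<close>.\<close>

lemma inv_measure_orbit_visits:
  fixes \<mu> :: "'a::metric_space measure"
  assumes \<mu>: "\<mu> \<in> inv_measures h" and h: "continuous_on UNIV h" and C: "C \<in> sets borel"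
  shows "\<exists>x. real n * measure \<mu> C / 2 \<le> (\<Sum>k<n. indicator C ((h ^^ k) x))"
proof (rule ccontr)
  assume "\<not> ?thesis"
  then have less: "(\<Sum>k<n. indicator C ((h ^^ k) x)) < real n * measure \<mu> C / 2" for x
    by (auto simp: not_le)
  interpret prob_space \<mu> by (rule inv_measuresD(2)[OF \<mu>])
  have visits: "(\<lambda>x. indicator C ((h ^^ k) x)) = (indicator ((h ^^ k) -` C) :: 'a \<Rightarrow> real)" for k
    by (auto simp: indicator_def)
  have sets_k: "(h ^^ k) -` C \<in> sets \<mu>" for k
    using measurable_sets[OF borel_measurable_funpow[OF h] C] inv_measuresD(1)[OF \<mu>] by simp
  have integrable_k: "integrable \<mu> (\<lambda>x. indicator C ((h ^^ k) x) :: real)" for k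
    unfolding visits using sets_k emeasure_finite by (simp add: less_top[symmetric])
  have "real n * measure \<mu> C = integral\<^sup>L \<mu> (\<lambda>x. \<Sum>k<n. indicator C ((h ^^ k) x))"
    using integrable_k sets_k inv_measures_measure_funpow_vimage[OF \<mu> h C]
    by (subst Bochner_Integration.integral_sum) (simp_all add: visits)
  also have "\<dots> \<le> integral\<^sup>L \<mu> (\<lambda>x. real n * measure \<mu> C / 2)"
    using integrable_k less by (intro integral_mono) (auto intro: less_imp_le)
  finally have "real n * measure \<mu> C \<le> 0" by (simp add: prob_space)
  moreover have "0 \<le> (\<Sum>k<n. indicator C ((h ^^ k) (undefined :: 'a)) :: real)" by (intro sum_nonneg) auto
  ultimately show False using less[of undefined] by linarith
qed

text \<open>Limits of averages along longer and longer orbit segments are invariant: the averages of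
  \<open>f \<circ> h\<close> and \<open>f\<close> over a segment differ by a telescoping term of size \<open>2 \<parallel>f\<parallel>\<^sub>\<infinity> / L\<close>.\<close>

lemma inv_measuresI_orbit_averages:
  fixes h :: "'a::metric_space \<Rightarrow> 'a"
  assumes cpt: "compact (UNIV :: 'a set)" and h: "continuous_on UNIV h"
    and \<mu>: "sets \<mu> = sets borel" "prob_space \<mu>"
    and L: "filterlim L at_top sequentially"
    and lim: "\<And>f :: 'a \<Rightarrow> real. continuous_on UNIV f \<Longrightarrow>
      (\<lambda>n. (\<Sum>k<L n. f ((h ^^ k) (x n))) / real (L n)) \<longlonglongrightarrow> integral\<^sup>L \<mu> f"
  shows "\<mu> \<in> inv_measures h"
proof (rule inv_measuresI_integral[OF \<mu> h])
  fix f :: "'a \<Rightarrow> real"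
  assume f: "continuous_on UNIV f"
  obtain B where B: "\<And>y. \<bar>f y\<bar> \<le> B"
    using compact_imp_bounded[OF compact_continuous_image[OF f cpt]] by (auto simp: bounded_iff)
  have fh: "continuous_on UNIV (\<lambda>y. f (h y))"
    using continuous_on_compose[OF h continuous_on_subset[OF f]] by (simp add: o_def)
  define a where "a n = (\<Sum>k<L n. f (h ((h ^^ k) (x n)))) / real (L n)" for n
  define b where "b n = (\<Sum>k<L n. f ((h ^^ k) (x n))) / real (L n)" for n
  have telescope: "(\<Sum>k<m. f (h ((h ^^ k) y))) - (\<Sum>k<m. f ((h ^^ k) y)) = f ((h ^^ m) y) - f y" for m y
    using sum_lessThan_telescope[of "\<lambda>k. f ((h ^^ k) y)" m] by (simp add: sum_subtractf)
  have bound: "norm (a n - b n) \<le> 2 * B * inverse (real (L n))" for n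
  proof -
    have "norm (a n - b n) = \<bar>f ((h ^^ L n) (x n)) - f (x n)\<bar> * inverse (real (L n))"
      unfolding a_def b_def diff_divide_distrib[symmetric] telescope by (simp add: divide_inverse abs_mult)
    also have "\<dots> \<le> 2 * B * inverse (real (L n))"
      using B[of "(h ^^ L n) (x n)"] B[of "x n"] by (intro mult_right_mono) auto
    finally show ?thesis .
  qed
  have "(\<lambda>n. 2 * B * inverse (real (L n))) \<longlonglongrightarrow> 0"
    using tendsto_mult_right_zero[OF tendsto_inverse_0_at_top[OF filterlim_compose[OF filterlim_real_sequentially L]]]
    by simp
  then have "(\<lambda>n. a n - b n) \<longlonglongrightarrow> 0"
    by (rule Lim_null_comparison[OF always_eventually, OF allI, OF bound])
  moreover have "b \<longlonglongrightarrow> integral\<^sup>L \<mu> f" unfolding b_def by (rule lim[OF f])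
  ultimately have "(\<lambda>n. (a n - b n) + b n) \<longlonglongrightarrow> 0 + integral\<^sup>L \<mu> f" by (rule tendsto_add)
  then have "a \<longlonglongrightarrow> integral\<^sup>L \<mu> f" by simp
  moreover have "a \<longlonglongrightarrow> integral\<^sup>L \<mu> (\<lambda>y. f (h y))" unfolding a_def by (rule lim[OF fh])
  ultimately show "integral\<^sup>L \<mu> (\<lambda>y. f (h y)) = integral\<^sup>L \<mu> f" by (rule LIMSEQ_unique[symmetric])
qed

lemma measure_ge_of_visit_frequency:
  fixes C :: "'a::metric_space set"
  assumes C: "closed C" "C \<noteq> {}" and \<mu>: "finite_measure \<mu>" "sets \<mu> = sets borel"
    and lim: "\<And>j. (\<lambda>n. (\<Sum>k<L n. cutoff C j (y n k)) / real (L n)) \<longlonglongrightarrow> integral\<^sup>L \<mu> (cutoff C j)"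
    and L: "\<And>n. L n > 0"
    and visits: "\<forall>\<^sub>F n in sequentially. c * real (L n) \<le> (\<Sum>k<L n. indicator C (y n k))"
  shows "c \<le> measure \<mu> C"
proof -
  have "c \<le> integral\<^sup>L \<mu> (cutoff C j)" for j
  proof -
    have "\<forall>\<^sub>F n in sequentially. c \<le> (\<Sum>k<L n. cutoff C j (y n k)) / real (L n)"
      using visits
    proof eventually_elim
      case (elim n)
      have "c * real (L n) \<le> (\<Sum>k<L n. cutoff C j (y n k))"
        using elim indicator_le_cutoff[of C] by (meson order_trans sum_mono)
      then show ?case using L[of n] by (simp add: field_simps)
    qed
    then show ?thesis by (rule tendsto_lowerbound[OF lim]) simp
  qed
  then show ?thesis using LIMSEQ_le_const[OF integral_cutoff_LIMSEQ[OF C \<mu>]] by blast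
qed

lemma measure_closed_thickening_LIMSEQ:
  fixes B :: "'a::metric_space set"
  assumes B: "closed B" "B \<noteq> {}" and \<mu>: "finite_measure \<mu>" "sets \<mu> = sets borel"
  shows "(\<lambda>n. measure \<mu> {x. infdist x B \<le> 1 / real (Suc n)}) \<longlonglongrightarrow> measure \<mu> B"
proof -
  interpret finite_measure \<mu> by (rule \<mu>(1))
  define C where "C n = {x. infdist x B \<le> 1 / real (Suc n)}" for n
  have "closed (C n)" for n
    unfolding C_def by (intro closed_Collect_le continuous_on_infdist continuous_on_id continuous_on_const)
  then have "range C \<subseteq> sets \<mu>" using \<mu>(2) by auto
  moreover have "decseq C"
    unfolding C_def by (intro decseq_SucI) (auto simp: frac_le intro: order_trans)
  moreover have "(\<Inter>n. C n) = B"
  proof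
    show "B \<subseteq> (\<Inter>n. C n)" unfolding C_def by (auto simp: infdist_zero)
    show "(\<Inter>n. C n) \<subseteq> B"
    proof
      fix x
      assume x: "x \<in> (\<Inter>n. C n)"
      show "x \<in> B"
      proof (rule ccontr)
        assume "x \<notin> B"
        then have "infdist x B > 0"
          using in_closure_iff_infdist_zero[OF B(2), of x] B(1) infdist_nonneg[of x B]
          by (simp add: closure_closed)
        then obtain n where "inverse (real (Suc n)) < infdist x B" using reals_Archimedean by blast
        moreover have "x \<in> C n" using x by blast
        ultimately show False unfolding C_def by (simp add: divide_inverse)
      qed
    qed
  qed
  ultimately show ?thesis unfolding C_def[symmetric] by (metis finite_Lim_measure_decseq)
qed

section \<open>Approximation by open sets with topologically small boundary\<close>

text \<open>Otherwise there are orbit segments spending a fixed proportion of time ever closer to \<open>B\<close>;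
  a weak-* limit of their empirical measures is invariant and charges \<open>B\<close>.\<close>

lemma universally_null_uniform_closed_thickening:
  fixes h :: "'a::metric_space \<Rightarrow> 'a"
  assumes cpt: "compact (UNIV :: 'a set)" and h: "continuous_on UNIV h"
    and B: "closed B" "B \<noteq> {}" "universally_null h B" and \<epsilon>: "\<epsilon> > 0"
  shows "\<exists>n. \<forall>\<mu>\<in>inv_measures h. measure \<mu> {x. infdist x B \<le> 1 / real (Suc n)} < \<epsilon>"
proof (rule ccontr)
  define C where "C n = {x. infdist x B \<le> 1 / real (Suc n)}" for n
  assume "\<not> ?thesis"
  then have large: "\<exists>\<mu>\<in>inv_measures h. \<epsilon> \<le> measure \<mu> (C n)" for n
    unfolding C_def by (auto simp: not_less)
  have C_closed: "closed (C n)" for n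
    unfolding C_def by (intro closed_Collect_le continuous_on_infdist continuous_on_id continuous_on_const)
  have C_antimono: "C n \<subseteq> C m" if "m \<le> n" for m n
  proof -
    have "1 / real (Suc n) \<le> 1 / real (Suc m)" using that by (simp add: frac_le)
    then show ?thesis unfolding C_def by auto
  qed
  have "\<exists>z. real (Suc n) * \<epsilon> / 2 \<le> (\<Sum>k<Suc n. indicator (C n) ((h ^^ k) z))" for n
  proof -
    obtain \<mu> where \<mu>: "\<mu> \<in> inv_measures h" "\<epsilon> \<le> measure \<mu> (C n)" using large by blast
    obtain z where "real (Suc n) * measure \<mu> (C n) / 2 \<le> (\<Sum>k<Suc n. indicator (C n) ((h ^^ k) z))"
      using inv_measure_orbit_visits[OF \<mu>(1) h borel_closed[OF C_closed]] by blast
    moreover have "real (Suc n) * \<epsilon> / 2 \<le> real (Suc n) * measure \<mu> (C n) / 2"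
      using \<mu>(2) by (intro divide_right_mono mult_left_mono) auto
    ultimately show ?thesis by (intro exI[of _ z]) linarith
  qed
  then have "\<exists>z. \<forall>n. real (Suc n) * \<epsilon> / 2 \<le> (\<Sum>k<Suc n. indicator (C n) ((h ^^ k) (z n)))"
    by (intro choice allI)
  then obtain z where z: "\<And>n. real (Suc n) * \<epsilon> / 2 \<le> (\<Sum>k<Suc n. indicator (C n) ((h ^^ k) (z n)))"
    by blast
  obtain r \<mu> where r: "strict_mono r" and \<mu>: "sets \<mu> = sets borel" "prob_space \<mu>"
    and lim: "\<And>f :: 'a \<Rightarrow> real. continuous_on UNIV f \<Longrightarrow>
      (\<lambda>n. (\<Sum>k<Suc (r n). f ((h ^^ k) (z (r n)))) / real (Suc (r n))) \<longlonglongrightarrow> integral\<^sup>L \<mu> f"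
  proof (rule empirical_averages_convergent_subseq[where L = Suc and x = "\<lambda>n k. (h ^^ k) (z n)", OF cpt])
    fix r \<mu>
    assume "strict_mono r" "sets \<mu> = sets borel" "prob_space \<mu>"
      "\<And>f :: 'a \<Rightarrow> real. continuous_on UNIV f \<Longrightarrow>
        (\<lambda>n. (\<Sum>k<Suc (r n). f ((h ^^ k) (z (r n)))) / real (Suc (r n))) \<longlonglongrightarrow> integral\<^sup>L \<mu> f"
    then show thesis by (rule that)
  qed simp
  interpret prob_space \<mu> by (rule \<mu>(2))
  have "filterlim (\<lambda>n. Suc (r n)) at_top sequentially"
    using filterlim_compose[OF filterlim_Suc filterlim_subseq[OF r]] by (simp add: o_def)
  then have "\<mu> \<in> inv_measures h"
    by (rule inv_measuresI_orbit_averages[where x = "\<lambda>n. z (r n)", OF cpt h \<mu>]) (rule lim)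
  have C_large: "\<epsilon> / 2 \<le> measure \<mu> (C m)" for m
  proof (rule measure_ge_of_visit_frequency[where L = "\<lambda>n. Suc (r n)" and y = "\<lambda>n k. (h ^^ k) (z (r n))"])
    have "B \<subseteq> C m" unfolding C_def by (auto simp: infdist_zero)
    then show "C m \<noteq> {}" using B(2) by blast
    show "\<forall>\<^sub>F n in sequentially. \<epsilon> / 2 * real (Suc (r n)) \<le> (\<Sum>k<Suc (r n). indicator (C m) ((h ^^ k) (z (r n))))"
      unfolding eventually_sequentially
    proof (intro exI allI impI)
      fix n
      assume "m \<le> n"
      then have "C (r n) \<subseteq> C m" using seq_suble[OF r, of n] by (intro C_antimono) simp
      then have "(\<Sum>k<Suc (r n). indicator (C (r n)) ((h ^^ k) (z (r n))) :: real)
          \<le> (\<Sum>k<Suc (r n). indicator (C m) ((h ^^ k) (z (r n))))"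
        by (intro sum_mono) (auto simp: indicator_def)
      then show "\<epsilon> / 2 * real (Suc (r n)) \<le> (\<Sum>k<Suc (r n). indicator (C m) ((h ^^ k) (z (r n))))"
        using z[of "r n"] by (simp add: algebra_simps)
    qed
  qed (rule C_closed finite_measure_axioms \<mu>(1) lim[OF continuous_on_cutoff] | simp)+
  have "\<exists>N. \<forall>n\<ge>N. \<epsilon> / 2 \<le> measure \<mu> {x. infdist x B \<le> 1 / real (Suc n)}"
    using C_large unfolding C_def by blast
  then have "\<epsilon> / 2 \<le> measure \<mu> B"
    by (rule LIMSEQ_le_const[OF measure_closed_thickening_LIMSEQ[OF B(1,2) finite_measure_axioms \<mu>(1)]])
  moreover have "measure \<mu> B = 0" using B(3) \<open>\<mu> \<in> inv_measures h\<close> unfolding universally_null_def by blast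
  ultimately show False using \<epsilon> by linarith
qed

lemma ball_thickening_subset_closed_thickening:
  "(\<Union>y\<in>B. ball y r) \<subseteq> {x. infdist x B \<le> r}"
proof
  fix x
  assume "x \<in> (\<Union>y\<in>B. ball y r)"
  then obtain y where "y \<in> B" "dist y x < r" by auto
  then have "infdist x B \<le> r" using infdist_le[of y B x] by (simp add: dist_commute)
  then show "x \<in> {x. infdist x B \<le> r}" by simp
qed

lemma subset_ball_thickening: "r > 0 \<Longrightarrow> A \<subseteq> (\<Union>y\<in>A. ball y r)"
  by (auto intro: UN_I)

lemma open_ball_thickening: "open (\<Union>y\<in>B. ball y r)"
  by (intro open_UN ballI open_ball)

lemma universally_null_uniform_thickening:
  fixes h :: "'a::metric_space \<Rightarrow> 'a"
  assumes "compact (UNIV :: 'a set)" "continuous_on UNIV h"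
    and B: "closed B" "universally_null h B" and "\<epsilon> > 0"
  shows "\<exists>r>0. \<forall>\<mu>\<in>inv_measures h. measure \<mu> (\<Union>y\<in>B. ball y r) < \<epsilon>"
proof (cases "B = {}")
  case True
  then show ?thesis using \<open>\<epsilon> > 0\<close> by (intro exI[of _ 1]) simp
next
  case False
  obtain n where n: "\<forall>\<mu>\<in>inv_measures h. measure \<mu> {x. infdist x B \<le> 1 / real (Suc n)} < \<epsilon>"
    using universally_null_uniform_closed_thickening[OF assms(1,2) B(1) False B(2) assms(5)] by blast
  define r where "r = 1 / real (Suc n)"
  have "measure \<mu> (\<Union>y\<in>B. ball y r) < \<epsilon>" if \<mu>: "\<mu> \<in> inv_measures h" for \<mu>
  proof -
    have "closed {x. infdist x B \<le> r}"
      by (intro closed_Collect_le continuous_on_infdist continuous_on_id continuous_on_const)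
    then have "measure \<mu> (\<Union>y\<in>B. ball y r) \<le> measure \<mu> {x. infdist x B \<le> r}"
      by (intro inv_measures_measure_mono[OF \<mu> ball_thickening_subset_closed_thickening]) simp
    also have "\<dots> < \<epsilon>" using n \<mu> unfolding r_def by blast
    finally show ?thesis .
  qed
  moreover have "r > 0" unfolding r_def by simp
  ultimately show ?thesis by blast
qed

lemma tsbp_closure_separation:
  fixes h :: "'a::metric_space \<Rightarrow> 'a"
  assumes cpt: "compact (UNIV :: 'a set)" and tsbp: "top_small_boundary_property h"
    and F: "closed F" "open U" "F \<subseteq> U"
  obtains V where "open V" "F \<subseteq> V" "closure V \<subseteq> U" "top_small h (frontier V)"
proof -
  have "compact F" using closed_Int_compact[OF F(1) cpt] by simp
  moreover have "compact (- U)" using closed_Int_compact[of "- U", OF _ cpt] F(2) by (simp add: closed_Compl)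
  moreover have "F \<inter> - U = {}" using F(3) by blast
  ultimately obtain V V' where V: "open V" "F \<subseteq> V" "- U \<subseteq> V'" "closure V \<inter> closure V' = {}"
      "top_small h (frontier V)"
    using tsbp unfolding top_small_boundary_property_def by meson
  have "closure V \<subseteq> U" using V(3,4) closure_subset by blast
  from V(1,2) this V(5) show ?thesis by (rule that)
qed

lemma tsbp_inner_approximation:
  fixes h :: "'a::metric_space \<Rightarrow> 'a"
  assumes cpt: "compact (UNIV :: 'a set)" and h: "continuous_on UNIV h"
    and tsbp: "top_small_boundary_property h" and "\<epsilon> > 0"
    and U: "open U" "universally_null h (frontier U)"
  obtains V where "open V" "closure V \<subseteq> U" "top_small h (frontier V)"
    "\<And>\<mu>. \<mu> \<in> inv_measures h \<Longrightarrow> measure \<mu> (U - closure V) < \<epsilon>"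
proof -
  obtain r where r: "r > 0" "\<forall>\<mu>\<in>inv_measures h. measure \<mu> (\<Union>y\<in>frontier U. ball y r) < \<epsilon>"
    using universally_null_uniform_thickening[OF cpt h frontier_closed U(2) \<open>\<epsilon> > 0\<close>] by blast
  define W where "W = (\<Union>y\<in>frontier U. ball y r)"
  have W_borel: "W \<in> sets borel" unfolding W_def by (intro borel_open open_ball_thickening)
  have "frontier U \<subseteq> W" unfolding W_def by (rule subset_ball_thickening[OF r(1)])
  then have "closure U - W \<subseteq> U" using U(1) by (auto simp: frontier_def interior_open)
  moreover have "closed (closure U - W)" unfolding W_def using open_ball_thickening by blast
  ultimately obtain V where V: "open V" "closure U - W \<subseteq> V" "closure V \<subseteq> U" "top_small h (frontier V)"
    using tsbp_closure_separation[OF cpt tsbp _ U(1)] by blast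
  have "measure \<mu> (U - closure V) < \<epsilon>" if \<mu>: "\<mu> \<in> inv_measures h" for \<mu>
  proof -
    have "U - closure V \<subseteq> W" using V(2) closure_subset by blast
    then have "measure \<mu> (U - closure V) \<le> measure \<mu> W"
      using W_borel by (rule inv_measures_measure_mono[OF \<mu>])
    also have "\<dots> < \<epsilon>" using r(2) \<mu> unfolding W_def by blast
    finally show ?thesis .
  qed
  with V(1,3,4) show ?thesis by (rule that)
qed

lemma tsbp_outer_approximation:
  fixes h :: "'a::metric_space \<Rightarrow> 'a"
  assumes cpt: "compact (UNIV :: 'a set)" and h: "continuous_on UNIV h"
    and tsbp: "top_small_boundary_property h" and "\<epsilon> > 0"
    and F: "open U" "closed F" "F \<subseteq> U" "universally_null h (frontier F)"
  obtains V where "open V" "F \<subseteq> V" "closure V \<subseteq> U" "top_small h (frontier V)"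
    "\<And>\<mu>. \<mu> \<in> inv_measures h \<Longrightarrow> measure \<mu> (V - F) < \<epsilon>"
proof -
  obtain r where r: "r > 0" "\<forall>\<mu>\<in>inv_measures h. measure \<mu> (\<Union>y\<in>frontier F. ball y r) < \<epsilon>"
    using universally_null_uniform_thickening[OF cpt h frontier_closed F(4) \<open>\<epsilon> > 0\<close>] by blast
  define W where "W = (\<Union>y\<in>frontier F. ball y r)"
  have W_borel: "W \<in> sets borel" unfolding W_def by (intro borel_open open_ball_thickening)
  have "frontier F \<subseteq> W" unfolding W_def by (rule subset_ball_thickening[OF r(1)])
  then have "F \<subseteq> U \<inter> (interior F \<union> W)" using F(2,3) by (auto simp: frontier_def closure_closed)
  moreover have "open (U \<inter> (interior F \<union> W))" unfolding W_def using F(1) open_ball_thickening by blast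
  ultimately obtain V where V: "open V" "F \<subseteq> V" "closure V \<subseteq> U \<inter> (interior F \<union> W)"
      "top_small h (frontier V)"
    using tsbp_closure_separation[OF cpt tsbp F(2)] by blast
  have "measure \<mu> (V - F) < \<epsilon>" if \<mu>: "\<mu> \<in> inv_measures h" for \<mu>
  proof -
    have "V - F \<subseteq> W" using V(3) closure_subset interior_subset[of F] by blast
    then have "measure \<mu> (V - F) \<le> measure \<mu> W"
      using W_borel by (rule inv_measures_measure_mono[OF \<mu>])
    also have "\<dots> < \<epsilon>" using r(2) \<mu> unfolding W_def by blast
    finally show ?thesis .
  qed
  moreover have "closure V \<subseteq> U" using V(3) by blast
  ultimately show ?thesis using V(1,2,4) by (intro that) auto
qed

theorem corollary4p10:
  fixes h :: "'a::metric_space \<Rightarrow> 'a" and \<epsilon> :: real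
  assumes "compact (UNIV :: 'a set)"
    and "infinite (UNIV :: 'a set)"
    and "homeo h"
    and "minimal_map h"
    and "top_small_boundary_property h"
    and "\<epsilon> > 0"
  shows "(\<forall>U. open U \<and> universally_null h (frontier U) \<longrightarrow>
            (\<exists>V. open V \<and> closure V \<subseteq> U \<and> top_small h (frontier V) \<and>
                 (\<forall>M \<in> inv_measures h. measure M (U - closure V) < \<epsilon>)))
       \<and> (\<forall>U F. open U \<and> closed F \<and> F \<subseteq> U \<and> universally_null h (frontier F) \<longrightarrow>
            (\<exists>V. open V \<and> F \<subseteq> V \<and> closure V \<subseteq> U \<and> top_small h (frontier V) \<and>
                 (\<forall>M \<in> inv_measures h. measure M (V - F) < \<epsilon>)))
       \<and> (\<forall>F. closed F \<and> universally_null h (frontier F) \<longrightarrow>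
            (\<exists>V. open V \<and> F \<subseteq> V \<and> top_small h (frontier V) \<and>
                 (\<forall>M \<in> inv_measures h. measure M (V - F) < \<epsilon>)))"
proof (intro conjI allI impI; elim conjE)
  note cpt = assms(1) and tsbp = assms(5) and \<epsilon> = assms(6)
  have h: "continuous_on UNIV h" using assms(3) unfolding homeo_def homeomorphism_def by blast
  show "\<exists>V. open V \<and> closure V \<subseteq> U \<and> top_small h (frontier V) \<and>
      (\<forall>M \<in> inv_measures h. measure M (U - closure V) < \<epsilon>)"
    if "open U" "universally_null h (frontier U)" for U
    using tsbp_inner_approximation[OF cpt h tsbp \<epsilon> that] by metis
  show "\<exists>V. open V \<and> F \<subseteq> V \<and> closure V \<subseteq> U \<and> top_small h (frontier V) \<and>
      (\<forall>M \<in> inv_measures h. measure M (V - F) < \<epsilon>)"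
    if "open U" "closed F" "F \<subseteq> U" "universally_null h (frontier F)" for U F
    using tsbp_outer_approximation[OF cpt h tsbp \<epsilon> that] by metis
  show "\<exists>V. open V \<and> F \<subseteq> V \<and> top_small h (frontier V) \<and>
      (\<forall>M \<in> inv_measures h. measure M (V - F) < \<epsilon>)"
    if "closed F" "universally_null h (frontier F)" for F
    using tsbp_outer_approximation[OF cpt h tsbp \<epsilon> open_UNIV that(1) subset_UNIV that(2)] by metis
qed

end
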